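(* Let $G$ be a finite directed multigraph and let $c:\mathcal M_G\to\mathbb R$ be an additive map such that $c(\mathcal C)>-|\mathcal C|$ for every simple directed cycle $\mathcal C$ of $G$. Then $c$ extends to an additive map $c:\mathbb Z^{E(G)}\to\mathbb R$ with $c(e)>-1$ for every $e\in E(G)$.
   Context: Elements of $\mathbb Z^{E(G)}$ are formal sums $\sum_{e\in E(G)}m_e\,e$. A simple directed cycle $\mathcal C$ is identified with the formal sum $\sum_{e\in\mathcal C}e$, and $|\mathcal C|$ is its number of edges. $\mathcal M_G\subseteq\mathbb Z^{E(G)}$ is the $\mathbb Z$-submodule generated by all simple directed cycles of $G$. *)

theory Defs
  imports Complex_Main "HOL-Library.Function_Algebras"
begin

text \<open>A finite directed multigraph is given by a finite type of edges 'e and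
  tail/head maps into a vertex type 'v (loops and parallel edges allowed).
  Elements of Z^E(G) are functions 'e \<Rightarrow> int.\<close>

definition simple_dicycle :: "('e \<Rightarrow> 'v) \<Rightarrow> ('e \<Rightarrow> 'v) \<Rightarrow> 'e list \<Rightarrow> bool" where
  "simple_dicycle src tgt es \<longleftrightarrow>
     es \<noteq> [] \<and> distinct es \<and> distinct (map src es) \<and>
     (\<forall>i < length es. tgt (es ! i) = src (es ! ((i + 1) mod length es)))"

definition cycle_vec :: "'e list \<Rightarrow> ('e \<Rightarrow> int)" where
  "cycle_vec es = (\<lambda>e. if e \<in> set es then 1 else 0)"

definition edge_vec :: "'e \<Rightarrow> ('e \<Rightarrow> int)" where
  "edge_vec e = (\<lambda>e'. if e' = e then 1 else 0)"

inductive_set cycle_module :: "('e \<Rightarrow> 'v) \<Rightarrow> ('e \<Rightarrow> 'v) \<Rightarrow> ('e \<Rightarrow> int) set"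
  for src :: "'e \<Rightarrow> 'v" and tgt :: "'e \<Rightarrow> 'v" where
  zero: "0 \<in> cycle_module src tgt"
| cyc: "simple_dicycle src tgt es \<Longrightarrow> cycle_vec es \<in> cycle_module src tgt"
| add: "x \<in> cycle_module src tgt \<Longrightarrow> y \<in> cycle_module src tgt \<Longrightarrow> x + y \<in> cycle_module src tgt"
| neg: "x \<in> cycle_module src tgt \<Longrightarrow> - x \<in> cycle_module src tgt"

definition additive_on :: "('e \<Rightarrow> int) set \<Rightarrow> (('e \<Rightarrow> int) \<Rightarrow> real) \<Rightarrow> bool" where
  "additive_on M c \<longleftrightarrow> (\<forall>x\<in>M. \<forall>y\<in>M. c (x + y) = c x + c y)"

end

theory Submission
  imports Defs
begin

text \<open>
  Since \<open>\<real>\<close> is divisible, the additive map \<open>c\<close> on \<open>M\<^sub>G\<close> extends, one generator at a time,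
  to all of \<open>\<int>\<^bsup>E(G)\<^esup>\<close>; the extension is given by edge weights \<open>\<alpha>\<close>, and the hypothesis says
  that every simple cycle has positive weight for \<open>\<alpha> + 1\<close>. Hence the weights \<open>\<alpha> + 1 - \<epsilon>\<close> have no
  negative cycle for some \<open>\<epsilon> > 0\<close>, and Bellman--Ford gives a potential \<open>p\<close> with
  \<open>\<alpha> e + 1 - \<epsilon> + p (src e) - p (tgt e) \<ge> 0\<close>. Adding the coboundary of \<open>p\<close> to \<open>\<alpha>\<close> changes
  no cycle value, so the resulting additive map still extends \<open>c\<close>, and it is \<open>> -1\<close> on every edge.
\<close>

section \<open>Extending additive maps from subgroups of \<open>\<int>\<^bsup>E\<^esup>\<close>\<close>

definition add_subgroup :: "'a::ab_group_add set \<Rightarrow> bool" where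
  "add_subgroup H \<longleftrightarrow> 0 \<in> H \<and> (\<forall>x\<in>H. \<forall>y\<in>H. x + y \<in> H) \<and> (\<forall>x\<in>H. - x \<in> H)"

lemma add_subgroup_UNIV: "add_subgroup UNIV"
  by (simp add: add_subgroup_def)

lemma add_subgroup_cycle_module: "add_subgroup (cycle_module src tgt)"
  unfolding add_subgroup_def by (auto intro: cycle_module.intros)

lemma add_subgroup_sum:
  assumes "add_subgroup H" "\<And>i. i \<in> A \<Longrightarrow> g i \<in> H"
  shows "sum g A \<in> H"
  using assms by (induction A rule: infinite_finite_induct) (auto simp: add_subgroup_def)

text \<open>Not \<open>[simp]\<close>: the simplifier would eta-expand every integer multiple of a vector.\<close>
lemma of_int_fun_apply: "(of_int k :: 'a \<Rightarrow> 'b::ring_1) x = of_int k"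
  by (cases k rule: int_diff_cases) (simp add: of_nat_fun)

lemma sum_fun_apply: "(\<Sum>i\<in>A. g i) x = (\<Sum>i\<in>A. g i x)"
  by (induction A rule: infinite_finite_induct) auto

lemma add_subgroup_of_int_mult:
  fixes H :: "'a::ring_1 set"
  assumes H: "add_subgroup H" and x: "x \<in> H"
  shows "of_int k * x \<in> H"
proof (induction k rule: int_induct[where k = 0])
  case base
  then show ?case using H by (simp add: add_subgroup_def)
next
  case (step1 i)
  have "of_int (i + 1) * x = of_int i * x + x" by (simp add: distrib_right)
  then show ?case using step1 H x unfolding add_subgroup_def by metis
next
  case (step2 i)
  have "of_int (i - 1) * x = of_int i * x + - x" by (simp add: left_diff_distrib)
  then show ?case using step2 H x unfolding add_subgroup_def by metis
qed

definition adjoin :: "'a::ring_1 set \<Rightarrow> 'a \<Rightarrow> 'a set" where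
  "adjoin H g = {h + of_int k * g | h k. h \<in> H}"

lemma mem_adjoinI: "h \<in> H \<Longrightarrow> h + of_int k * g \<in> adjoin H g"
  unfolding adjoin_def by blast

lemma add_subgroup_adjoin:
  assumes H: "add_subgroup H"
  shows "add_subgroup (adjoin H g)"
  unfolding add_subgroup_def
proof (intro conjI ballI)
  have "0 + of_int 0 * g \<in> adjoin H g"
    using H by (intro mem_adjoinI) (simp add: add_subgroup_def)
  then show "0 \<in> adjoin H g" by simp
next
  fix x y assume "x \<in> adjoin H g" "y \<in> adjoin H g"
  then obtain h1 k1 h2 k2 where hk: "h1 \<in> H" "h2 \<in> H" "x = h1 + of_int k1 * g" "y = h2 + of_int k2 * g"
    unfolding adjoin_def by blast
  have "(h1 + h2) + of_int (k1 + k2) * g \<in> adjoin H g"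
    using H hk(1,2) by (intro mem_adjoinI) (simp add: add_subgroup_def)
  then show "x + y \<in> adjoin H g" by (simp add: hk(3,4) algebra_simps)
next
  fix x assume "x \<in> adjoin H g"
  then obtain h k where hk: "h \<in> H" "x = h + of_int k * g"
    unfolding adjoin_def by blast
  have "- h + of_int (- k) * g \<in> adjoin H g"
    using H hk(1) by (intro mem_adjoinI) (simp add: add_subgroup_def)
  then show "- x \<in> adjoin H g" by (simp add: hk(2))
qed

lemma subset_adjoin: "H \<subseteq> adjoin H g"
  using mem_adjoinI[of _ H 0 g] by auto

lemma mem_adjoin: "add_subgroup H \<Longrightarrow> g \<in> adjoin H g"
  using mem_adjoinI[of 0 H 1 g] by (simp add: add_subgroup_def)

context
  fixes H :: "('e \<Rightarrow> int) set" and f :: "('e \<Rightarrow> int) \<Rightarrow> real"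
  assumes H: "add_subgroup H" and f: "additive_on H f"
begin

lemma additive_on_add: "x \<in> H \<Longrightarrow> y \<in> H \<Longrightarrow> f (x + y) = f x + f y"
  using f by (simp add: additive_on_def)

lemma additive_on_zero: "f 0 = 0"
  using additive_on_add[of 0 0] H by (simp add: add_subgroup_def)

lemma additive_on_uminus: "x \<in> H \<Longrightarrow> f (- x) = - f x"
  using additive_on_add[of x "- x"] additive_on_zero H by (simp add: add_subgroup_def)

lemma additive_on_diff: "x \<in> H \<Longrightarrow> y \<in> H \<Longrightarrow> f (x - y) = f x - f y"
  using additive_on_add[of x "- y"] additive_on_uminus[of y] H by (simp add: add_subgroup_def)

lemma additive_on_of_int_mult:
  assumes x: "x \<in> H"
  shows "f (of_int k * x) = of_int k * f x"
proof (induction k rule: int_induct[where k = 0])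
  case base
  then show ?case by (simp only: of_int_0 mult_zero_left additive_on_zero)
next
  case (step1 i)
  have "of_int (i + 1) * x = of_int i * x + x" by (simp add: distrib_right)
  then have "f (of_int (i + 1) * x) = f (of_int i * x) + f x"
    using additive_on_add[OF add_subgroup_of_int_mult[OF H x] x] by metis
  then show ?case by (simp only: step1(2)) (simp add: distrib_right)
next
  case (step2 i)
  have "of_int (i - 1) * x = of_int i * x - x" by (simp add: left_diff_distrib)
  then have "f (of_int (i - 1) * x) = f (of_int i * x) - f x"
    using additive_on_diff[OF add_subgroup_of_int_mult[OF H x] x] by metis
  then show ?case by (simp only: step2(2)) (simp add: left_diff_distrib)
qed

lemma additive_on_sum: "(\<And>i. i \<in> A \<Longrightarrow> g i \<in> H) \<Longrightarrow> f (sum g A) = (\<Sum>i\<in>A. f (g i))"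
proof (induction A rule: infinite_finite_induct)
  case (insert i A)
  have "f (g i + sum g A) = f (g i) + f (sum g A)"
    using insert.prems by (intro additive_on_add add_subgroup_sum[OF H]) auto
  moreover have "f (sum g A) = (\<Sum>i\<in>A. f (g i))" using insert by simp
  ultimately show ?case by (simp only: sum.insert[OF insert.hyps])
qed (simp_all add: additive_on_zero)


text \<open>Divisibility of \<open>\<real>\<close> enters here: if \<open>n * g \<in> H\<close> with \<open>n \<noteq> 0\<close>, the slope is \<open>f (n * g) / n\<close>.\<close>
lemma additive_on_multiples_slope:
  "\<exists>t. \<forall>m. of_int m * g \<in> H \<longrightarrow> f (of_int m * g) = of_int m * t"
proof (cases "\<exists>n. n \<noteq> 0 \<and> of_int n * g \<in> H")
  case True
  then obtain n where n: "n \<noteq> 0" "of_int n * g \<in> H" by blast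
  show ?thesis
  proof (intro exI allI impI)
    fix m assume m: "of_int m * g \<in> H"
    have "of_int n * (of_int m * g) = of_int m * (of_int n * g)"
      by (rule mult.left_commute)
    then have "of_int n * f (of_int m * g) = of_int m * f (of_int n * g)"
      using additive_on_of_int_mult[OF m, of n] additive_on_of_int_mult[OF n(2), of m]
      by metis
    then show "f (of_int m * g) = of_int m * (f (of_int n * g) / of_int n)"
      using n(1) by (simp add: field_simps)
  qed
next
  case False
  show ?thesis
  proof (intro exI[of _ 0] allI impI)
    fix m assume "of_int m * g \<in> H"
    with False have "m = 0" by blast
    then show "f (of_int m * g) = of_int m * 0"
      using additive_on_zero by simp
  qed
qed

lemma additive_on_extend_adjoin:
  "\<exists>f'. additive_on (adjoin H g) f' \<and> (\<forall>h\<in>H. f' h = f h)"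
proof -
  obtain t where t: "\<And>m. of_int m * g \<in> H \<Longrightarrow> f (of_int m * g) = of_int m * t"
    using additive_on_multiples_slope by blast
  have consistent: "f h + of_int k * t = f h' + of_int k' * t"
    if "h \<in> H" "h' \<in> H" "h + of_int k * g = h' + of_int k' * g" for h h' k k'
  proof -
    have "h - h' = of_int (k' - k) * g" using that(3) by (simp add: algebra_simps)
    moreover have "h - h' \<in> H"
      using H that(1,2) unfolding add_subgroup_def by (metis diff_conv_add_uminus)
    ultimately have "f h - f h' = of_int (k' - k) * t"
      using t additive_on_diff[OF that(1,2)] by metis
    then show ?thesis by (simp add: algebra_simps)
  qed
  define f' where
    "f' x = (SOME r. \<exists>h k. h \<in> H \<and> x = h + of_int k * g \<and> r = f h + of_int k * t)" for x
  have f'_eq: "f' (h + of_int k * g) = f h + of_int k * t" if "h \<in> H" for h k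
    unfolding f'_def
  proof (rule some_equality)
    fix r assume "\<exists>h' k'. h' \<in> H \<and> h + of_int k * g = h' + of_int k' * g \<and> r = f h' + of_int k' * t"
    then show "r = f h + of_int k * t" using consistent[OF that] by metis
  qed (use that in blast)
  show ?thesis
  proof (intro exI conjI ballI)
    show "f' h = f h" if "h \<in> H" for h
      using f'_eq[OF that, of 0] by simp
    show "additive_on (adjoin H g) f'"
      unfolding additive_on_def
    proof (intro ballI)
      fix x y assume "x \<in> adjoin H g" "y \<in> adjoin H g"
      then obtain h1 k1 h2 k2 where hk: "h1 \<in> H" "h2 \<in> H"
        "x = h1 + of_int k1 * g" "y = h2 + of_int k2 * g"
        unfolding adjoin_def by blast
      have "x + y = (h1 + h2) + of_int (k1 + k2) * g"
        using hk(3,4) by (simp add: algebra_simps)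
      moreover have "h1 + h2 \<in> H" using H hk(1,2) by (simp add: add_subgroup_def)
      ultimately have "f' (x + y) = f (h1 + h2) + of_int (k1 + k2) * t"
        using f'_eq by metis
      moreover have "f' x = f h1 + of_int k1 * t" "f' y = f h2 + of_int k2 * t"
        using f'_eq hk by simp_all
      ultimately show "f' (x + y) = f' x + f' y"
        using additive_on_add[OF hk(1,2)] by (simp add: algebra_simps)
    qed
  qed
qed

end

lemma additive_on_extend_list:
  assumes "add_subgroup H" "additive_on H f"
  shows "\<exists>H' f'. add_subgroup H' \<and> H \<subseteq> H' \<and> set gs \<subseteq> H' \<and> additive_on H' f' \<and>
           (\<forall>h\<in>H. f' h = f h)"
  using assms
proof (induction gs arbitrary: H f)
  case Nil
  then show ?case by (intro exI[of _ H] exI[of _ f]) auto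
next
  case (Cons g gs)
  obtain f1 where f1: "additive_on (adjoin H g) f1" "\<forall>h\<in>H. f1 h = f h"
    using additive_on_extend_adjoin[OF Cons.prems] by blast
  obtain H' f' where "add_subgroup H'" "adjoin H g \<subseteq> H'" "set gs \<subseteq> H'" "additive_on H' f'"
      "\<forall>h\<in>adjoin H g. f' h = f1 h"
    using Cons.IH[OF add_subgroup_adjoin[OF Cons.prems(1)] f1(1)] by blast
  with f1(2) subset_adjoin[of H g] mem_adjoin[OF Cons.prems(1), of g] show ?case
    by (intro exI[of _ H'] exI[of _ f']) auto
qed

lemma edge_vec_expansion: "(x :: 'e::finite \<Rightarrow> int) = (\<Sum>e\<in>UNIV. of_int (x e) * edge_vec e)"
proof
  fix e'
  have "(\<Sum>e\<in>UNIV. of_int (x e) * edge_vec e) e' = (\<Sum>e\<in>UNIV. x e * edge_vec e e')"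
    by (simp add: sum_fun_apply of_int_fun_apply)
  also have "\<dots> = (\<Sum>e\<in>UNIV. if e' = e then x e else 0)"
    by (rule sum.cong) (auto simp: edge_vec_def)
  also have "\<dots> = x e'" by simp
  finally show "x e' = (\<Sum>e\<in>UNIV. of_int (x e) * edge_vec e) e'" ..
qed

lemma add_subgroup_edge_vecs_UNIV:
  assumes H: "add_subgroup (H :: ('e::finite \<Rightarrow> int) set)" and edges: "\<And>e. edge_vec e \<in> H"
  shows "H = UNIV"
proof -
  have "x \<in> H" for x :: "'e \<Rightarrow> int"
  proof -
    have "(\<Sum>e\<in>UNIV. of_int (x e) * edge_vec e) \<in> H"
      by (intro add_subgroup_sum[OF H] add_subgroup_of_int_mult[OF H] edges)
    then show "x \<in> H" by (simp only: edge_vec_expansion[of x, symmetric])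
  qed
  then show ?thesis by blast
qed

lemma additive_on_extend_UNIV:
  fixes H :: "('e::finite \<Rightarrow> int) set"
  assumes "add_subgroup H" "additive_on H f"
  shows "\<exists>f'. additive_on UNIV f' \<and> (\<forall>h\<in>H. f' h = f h)"
proof -
  obtain es :: "'e list" where es: "set es = UNIV" using finite_list[OF finite_UNIV] by blast
  obtain H' f' where "add_subgroup H'" "H \<subseteq> H'" "set (map edge_vec es) \<subseteq> H'" "additive_on H' f'"
      "\<forall>h\<in>H. f' h = f h"
    using additive_on_extend_list[OF assms] by blast
  moreover have "H' = UNIV"
    using add_subgroup_edge_vecs_UNIV \<open>add_subgroup H'\<close> \<open>set (map edge_vec es) \<subseteq> H'\<close> es by auto
  ultimately show ?thesis by blast
qed

section \<open>Additive maps given by edge weights\<close>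

definition additive_of_weights :: "('e::finite \<Rightarrow> real) \<Rightarrow> ('e \<Rightarrow> int) \<Rightarrow> real" where
  "additive_of_weights w x = (\<Sum>e\<in>UNIV. of_int (x e) * w e)"

lemma additive_on_additive_of_weights: "additive_on UNIV (additive_of_weights w)"
  unfolding additive_on_def additive_of_weights_def by (simp add: sum.distrib distrib_right)

lemma additive_of_weights_add:
  "additive_of_weights (\<lambda>e. v e + w e) x = additive_of_weights v x + additive_of_weights w x"
  unfolding additive_of_weights_def by (simp add: sum.distrib distrib_left)

lemma additive_of_weights_edge_vec: "additive_of_weights w (edge_vec e) = w e"
proof -
  have "additive_of_weights w (edge_vec e) = (\<Sum>e'\<in>UNIV. if e' = e then w e' else 0)"
    unfolding additive_of_weights_def edge_vec_def by (rule sum.cong) auto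
  then show ?thesis by simp
qed

lemma additive_of_weights_cycle_vec: "additive_of_weights w (cycle_vec es) = (\<Sum>e\<in>set es. w e)"
proof -
  have "additive_of_weights w (cycle_vec es) = (\<Sum>e\<in>UNIV. if e \<in> set es then w e else 0)"
    unfolding additive_of_weights_def cycle_vec_def by (rule sum.cong) auto
  also have "\<dots> = (\<Sum>e\<in>set es. w e)" by (simp add: sum.If_cases)
  finally show ?thesis .
qed

lemma additive_on_UNIV_eq_additive_of_weights:
  fixes f :: "('e::finite \<Rightarrow> int) \<Rightarrow> real"
  assumes f: "additive_on UNIV f"
  shows "f = additive_of_weights (\<lambda>e. f (edge_vec e))"
proof
  fix x :: "'e \<Rightarrow> int"
  have "f x = f (\<Sum>e\<in>UNIV. of_int (x e) * edge_vec e)"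
    using arg_cong[OF edge_vec_expansion, of f] .
  also have "\<dots> = (\<Sum>e\<in>UNIV. f (of_int (x e) * edge_vec e))"
    by (rule additive_on_sum[OF add_subgroup_UNIV f]) simp
  also have "\<dots> = (\<Sum>e\<in>UNIV. of_int (x e) * f (edge_vec e))"
    using additive_on_of_int_mult[OF add_subgroup_UNIV f] by simp
  finally show "f x = additive_of_weights (\<lambda>e. f (edge_vec e)) x"
    unfolding additive_of_weights_def .
qed

lemma additive_on_UNIV_vanishing_on_cycle_module:
  assumes g: "additive_on UNIV g"
    and cycles: "\<And>es. simple_dicycle src tgt es \<Longrightarrow> g (cycle_vec es) = 0"
    and x: "x \<in> cycle_module src tgt"
  shows "g x = 0"
  using x
proof induction
  case zero
  show ?case by (rule additive_on_zero[OF add_subgroup_UNIV g])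
next
  case (cyc es)
  then show ?case by (rule cycles)
next
  case (add x y)
  then show ?case by (simp only: additive_on_add[OF add_subgroup_UNIV g UNIV_I UNIV_I] add_0)
next
  case (neg x)
  then show ?case by (simp only: additive_on_uminus[OF add_subgroup_UNIV g UNIV_I] neg_0_equal_iff_equal)
qed

lemma sum_list_rotate1: "sum_list (rotate1 xs) = sum_list (xs :: 'a::comm_monoid_add list)"
  by (cases xs) (simp_all add: add.commute)

lemma simple_dicycle_potential_sum:
  fixes p :: "'v \<Rightarrow> 'a::ab_group_add"
  assumes "simple_dicycle src tgt es"
  shows "(\<Sum>e\<in>set es. p (src e) - p (tgt e)) = 0"
proof -
  have es: "distinct es" "es \<noteq> []"
    and chain: "\<And>i. i < length es \<Longrightarrow> tgt (es ! i) = src (es ! ((i + 1) mod length es))"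
    using assms by (auto simp: simple_dicycle_def)
  have "map (\<lambda>e. p (tgt e)) es = rotate1 (map (\<lambda>e. p (src e)) es)"
    by (rule nth_equalityI) (use es(2) chain in \<open>simp_all add: nth_rotate1\<close>)
  then have "sum_list (map (\<lambda>e. p (tgt e)) es) = sum_list (map (\<lambda>e. p (src e)) es)"
    by (simp add: sum_list_rotate1)
  then show ?thesis
    using es(1) by (simp add: sum_subtractf sum_list_distinct_conv_sum_set)
qed

section \<open>Walks and potentials\<close>

fun walk :: "('e \<Rightarrow> 'v) \<Rightarrow> ('e \<Rightarrow> 'v) \<Rightarrow> 'e list \<Rightarrow> bool" where
  "walk src tgt [] = True"
| "walk src tgt [e] = True"
| "walk src tgt (e1 # e2 # es) = (tgt e1 = src e2 \<and> walk src tgt (e2 # es))"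

lemma walk_append:
  "walk src tgt (xs @ ys) \<longleftrightarrow>
     walk src tgt xs \<and> walk src tgt ys \<and> (xs \<noteq> [] \<and> ys \<noteq> [] \<longrightarrow> tgt (last xs) = src (hd ys))"
  by (induction xs) (auto simp: neq_Nil_conv elim: walk.elims)

lemma walk_nth: "walk src tgt es \<Longrightarrow> Suc i < length es \<Longrightarrow> tgt (es ! i) = src (es ! Suc i)"
proof (induction src tgt es arbitrary: i rule: walk.induct)
  case (3 src tgt e1 e2 es)
  then show ?case by (cases i) auto
qed auto

lemma simple_dicycleI:
  assumes "walk src tgt es" "es \<noteq> []" "tgt (last es) = src (hd es)" "distinct (map src es)"
  shows "simple_dicycle src tgt es"
  unfolding simple_dicycle_def
proof (intro conjI allI impI)
  show "distinct es" using assms(4) by (simp add: distinct_map)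
  fix i assume i: "i < length es"
  show "tgt (es ! i) = src (es ! ((i + 1) mod length es))"
  proof (cases "Suc i < length es")
    case True
    then show ?thesis using walk_nth[OF assms(1) True] by simp
  next
    case False
    then have "i = length es - 1" using i by simp
    then show ?thesis using assms(2,3) by (simp add: last_conv_nth hd_conv_nth)
  qed
qed (use assms in auto)

lemma walk_split_at_repeated_vertex:
  assumes "walk src tgt es" "\<not> distinct (map src es)"
  obtains A B C where "es = A @ B @ C" "B \<noteq> []" "C \<noteq> []"
    "walk src tgt B" "tgt (last B) = src (hd B)" "walk src tgt (A @ C)" "src (hd C) = src (hd B)"
proof -
  obtain xs ys zs v where decomp: "map src es = xs @ [v] @ ys @ [v] @ zs"
    using not_distinct_decomp[OF assms(2)] by blast
  define A where "A = take (length xs) es"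
  define B where "B = take (Suc (length ys)) (drop (length xs) es)"
  define C where "C = drop (length xs + Suc (length ys)) es"
  have es: "es = A @ B @ C"
    unfolding A_def B_def C_def by (metis append_take_drop_id drop_drop add.commute)
  have "map src (drop (length xs) es) = v # ys @ v # zs"
    using decomp by (simp add: drop_map[symmetric])
  then have B: "map src B = v # ys"
    unfolding B_def take_map[symmetric] by simp
  have C: "map src C = v # zs"
    unfolding C_def drop_map[symmetric] decomp by simp
  from B C have ne: "B \<noteq> []" "C \<noteq> []" and hd: "src (hd B) = v" "src (hd C) = v"
    by (auto simp: neq_Nil_conv)
  have "walk src tgt (A @ B @ C)" using assms(1) es by simp
  then have "walk src tgt A" "walk src tgt B" "walk src tgt C"
    "A \<noteq> [] \<Longrightarrow> tgt (last A) = src (hd B)" "tgt (last B) = src (hd C)"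
    using ne by (simp_all add: walk_append)
  then have "walk src tgt (A @ C)" "tgt (last B) = src (hd B)"
    using hd by (auto simp: walk_append)
  with that es ne \<open>walk src tgt B\<close> hd show thesis by simp
qed

context
  fixes src :: "'e \<Rightarrow> 'v" and tgt :: "'e \<Rightarrow> 'v" and a :: "'e \<Rightarrow> 'w::linordered_ab_group_add"
  assumes cycles_nonneg: "\<And>es. simple_dicycle src tgt es \<Longrightarrow> 0 \<le> sum_list (map a es)"
begin

lemma closed_walk_weight_nonneg:
  "walk src tgt es \<Longrightarrow> es \<noteq> [] \<Longrightarrow> tgt (last es) = src (hd es) \<Longrightarrow> 0 \<le> sum_list (map a es)"
proof (induction "length es" arbitrary: es rule: less_induct)
  case less
  show ?case
  proof (cases "distinct (map src es)")
    case True
    then show ?thesis using cycles_nonneg simple_dicycleI less.prems by blast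
  next
    case False
    with less.prems(1) obtain A B C where split: "es = A @ B @ C" "B \<noteq> []" "C \<noteq> []"
      "walk src tgt B" "tgt (last B) = src (hd B)" "walk src tgt (A @ C)" "src (hd C) = src (hd B)"
      by (rule walk_split_at_repeated_vertex)
    have "0 \<le> sum_list (map a B)"
      using less.hyps[of B] split by simp
    moreover have "0 \<le> sum_list (map a (A @ C))"
    proof (rule less.hyps)
      show "tgt (last (A @ C)) = src (hd (A @ C))"
        using less.prems(3) split by (cases A) auto
    qed (use split in simp_all)
    moreover have "sum_list (map a es) = sum_list (map a B) + sum_list (map a (A @ C))"
      using split by (simp add: ac_simps)
    ultimately show ?thesis by simp
  qed
qed

lemma walk_shortcut_to_path:
  "walk src tgt es \<Longrightarrow> \<exists>es'. walk src tgt es' \<and> distinct (map src es') \<and>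
     (es' = [] \<or> tgt (last es') = tgt (last es)) \<and> sum_list (map a es') \<le> sum_list (map a es)"
proof (induction "length es" arbitrary: es rule: less_induct)
  case less
  show ?case
  proof (cases "distinct (map src es)")
    case True
    then show ?thesis using less.prems by blast
  next
    case False
    with less.prems obtain A B C where split: "es = A @ B @ C" "B \<noteq> []" "C \<noteq> []"
      "walk src tgt B" "tgt (last B) = src (hd B)" "walk src tgt (A @ C)"
      by (rule walk_split_at_repeated_vertex)
    have "0 \<le> sum_list (map a B)"
      using closed_walk_weight_nonneg split by simp
    then have "sum_list (map a (A @ C)) \<le> sum_list (map a es)"
      using split by (simp add: ac_simps add_increasing)
    moreover have "tgt (last (A @ C)) = tgt (last es)"
      using split by simp
    moreover obtain es' where "walk src tgt es'" "distinct (map src es')"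
      "es' = [] \<or> tgt (last es') = tgt (last (A @ C))"
      "sum_list (map a es') \<le> sum_list (map a (A @ C))"
      using less.hyps[of "A @ C"] split by auto
    ultimately show ?thesis by (metis order_trans)
  qed
qed

text \<open>Bellman--Ford: the weight of a lightest path ending at \<open>v\<close> is a feasible potential at \<open>v\<close>.\<close>
lemma nonneg_cycles_potential:
  assumes "finite (UNIV :: 'e set)"
  shows "\<exists>p. \<forall>e. p (tgt e) \<le> p (src e) + a e"
proof -
  define paths where
    "paths v = {es. walk src tgt es \<and> distinct (map src es) \<and> (es = [] \<or> tgt (last es) = v)}" for v
  define p where "p v = Min ((\<lambda>es. sum_list (map a es)) ` paths v)" for v
  have fin: "finite (paths v)" for v
    by (rule finite_subset[OF _ finite_subset_distinct[OF assms]]) (auto simp: paths_def distinct_map)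
  have p_le: "p v \<le> sum_list (map a es)" if "es \<in> paths v" for es v
    unfolding p_def using fin that by simp
  have p_attained: "\<exists>es \<in> paths v. p v = sum_list (map a es)" for v
  proof -
    have "[] \<in> paths v" by (simp add: paths_def)
    then have "p v \<in> (\<lambda>es. sum_list (map a es)) ` paths v"
      unfolding p_def using fin by (intro Min_in) auto
    then show ?thesis by auto
  qed
  show ?thesis
  proof (intro exI allI)
    fix e
    obtain es where es: "es \<in> paths (src e)" "p (src e) = sum_list (map a es)"
      using p_attained by blast
    have "walk src tgt (es @ [e])" using es(1) by (auto simp: paths_def walk_append)
    then obtain es' where "walk src tgt es'" "distinct (map src es')"
      "es' = [] \<or> tgt (last es') = tgt (last (es @ [e]))"
      "sum_list (map a es') \<le> sum_list (map a (es @ [e]))"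
      using walk_shortcut_to_path by blast
    then have "es' \<in> paths (tgt e)" "sum_list (map a es') \<le> p (src e) + a e"
      using es(2) by (auto simp: paths_def)
    then show "p (tgt e) \<le> p (src e) + a e" using p_le by (blast intro: order_trans)
  qed
qed

end

text \<open>Lowering all weights by \<open>\<epsilon>\<close>, half the least mean weight of a simple cycle, keeps every
  simple cycle nonnegative, and the resulting potential has slack \<open>\<epsilon>\<close> on each edge.\<close>
lemma positive_cycles_strict_potential:
  fixes src tgt :: "'e::finite \<Rightarrow> 'v" and w :: "'e \<Rightarrow> real"
  assumes pos: "\<And>es. simple_dicycle src tgt es \<Longrightarrow> 0 < (\<Sum>e\<in>set es. w e)"
  shows "\<exists>p. \<forall>e. 0 < w e + p (src e) - p (tgt e)"
proof -
  define mean where "mean es = (\<Sum>e\<in>set es. w e) / real (length es)" for es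
  define cycles where "cycles = {es. simple_dicycle src tgt es}"
  define \<epsilon> where "\<epsilon> = Min (insert 1 (mean ` cycles)) / 2"
  have "finite cycles"
    by (rule finite_subset[OF _ finite_subset_distinct[of UNIV]])
      (auto simp: cycles_def simple_dicycle_def)
  moreover have "0 < mean es" if "es \<in> cycles" for es
    using pos[of es] that by (simp add: cycles_def mean_def simple_dicycle_def)
  ultimately have Min_pos: "0 < Min (insert 1 (mean ` cycles))"
    by (subst Min_gr_iff) auto
  have \<epsilon>_below_mean: "\<epsilon> * real (length es) < (\<Sum>e\<in>set es. w e)" if "simple_dicycle src tgt es" for es
  proof -
    have "Min (insert 1 (mean ` cycles)) \<le> mean es"
      using \<open>finite cycles\<close> that by (intro Min_le) (auto simp: cycles_def)
    then have "\<epsilon> < mean es" using Min_pos by (simp add: \<epsilon>_def)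
    moreover have "0 < length es" using that by (simp add: simple_dicycle_def)
    ultimately show ?thesis by (simp add: mean_def pos_less_divide_eq)
  qed
  have "0 \<le> sum_list (map (\<lambda>e. w e - \<epsilon>) es)" if "simple_dicycle src tgt es" for es
  proof -
    have "distinct es" using that by (simp add: simple_dicycle_def)
    then have "sum_list (map (\<lambda>e. w e - \<epsilon>) es) = (\<Sum>e\<in>set es. w e) - \<epsilon> * real (length es)"
      by (simp add: sum_list_distinct_conv_sum_set sum_subtractf distinct_card)
    then show ?thesis using \<epsilon>_below_mean[OF that] by simp
  qed
  then obtain p where p: "\<forall>e. p (tgt e) \<le> p (src e) + (w e - \<epsilon>)"
    using nonneg_cycles_potential[of src tgt "\<lambda>e. w e - \<epsilon>", OF _ finite_UNIV] by blast
  have "0 < \<epsilon>" using Min_pos by (simp add: \<epsilon>_def)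
  show ?thesis
  proof (intro exI allI)
    show "0 < w e + p (src e) - p (tgt e)" for e
      using p[rule_format, of e] \<open>0 < \<epsilon>\<close> by linarith
  qed
qed

theorem mainTheorem12:
  fixes src :: "'e::finite \<Rightarrow> 'v" and tgt :: "'e \<Rightarrow> 'v"
    and c :: "('e \<Rightarrow> int) \<Rightarrow> real"
  assumes "additive_on (cycle_module src tgt) c"
    and "\<And>es. simple_dicycle src tgt es \<Longrightarrow> c (cycle_vec es) > - real (length es)"
  shows "\<exists>c'. additive_on UNIV c' \<and> (\<forall>x \<in> cycle_module src tgt. c' x = c x)
              \<and> (\<forall>e. c' (edge_vec e) > -1)"
proof -
  obtain f where f: "additive_on UNIV f" "\<forall>x \<in> cycle_module src tgt. f x = c x"
    using additive_on_extend_UNIV[OF add_subgroup_cycle_module assms(1)] by blast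
  define \<alpha> where "\<alpha> e = f (edge_vec e)" for e
  have f_eq: "f = additive_of_weights \<alpha>"
    unfolding \<alpha>_def by (rule additive_on_UNIV_eq_additive_of_weights[OF f(1)])
  have "0 < (\<Sum>e\<in>set es. \<alpha> e + 1)" if "simple_dicycle src tgt es" for es
  proof -
    have "c (cycle_vec es) = f (cycle_vec es)"
      using f(2) cycle_module.cyc[OF that] by simp
    also have "\<dots> = (\<Sum>e\<in>set es. \<alpha> e)"
      by (simp add: f_eq additive_of_weights_cycle_vec)
    finally have "c (cycle_vec es) = (\<Sum>e\<in>set es. \<alpha> e)" .
    moreover have "length es = card (set es)"
      using that by (simp add: simple_dicycle_def distinct_card)
    ultimately show ?thesis using assms(2)[OF that] by (simp add: sum.distrib)
  qed
  then obtain p where p: "\<forall>e. 0 < \<alpha> e + 1 + p (src e) - p (tgt e)"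
    using positive_cycles_strict_potential by blast
  define c' where "c' = additive_of_weights (\<lambda>e. \<alpha> e + (p (src e) - p (tgt e)))"
  have "c' x = c x" if "x \<in> cycle_module src tgt" for x
  proof -
    have "additive_of_weights (\<lambda>e. p (src e) - p (tgt e)) x = 0"
      using additive_on_UNIV_vanishing_on_cycle_module[OF additive_on_additive_of_weights _ that]
      by (simp add: additive_of_weights_cycle_vec simple_dicycle_potential_sum)
    then show ?thesis
      using f(2) that by (simp add: c'_def additive_of_weights_add f_eq)
  qed
  moreover have "c' (edge_vec e) > -1" for e
    using p[rule_format, of e] by (simp add: c'_def additive_of_weights_edge_vec)
  ultimately show ?thesis
    using additive_on_additive_of_weights unfolding c'_def by blast
qed

end
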